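(* Let $m\ge 2$ and let $a_1,a_2,b_1,\dots,b_m,c_1,\dots,c_m\in\mathbb{C}$ satisfy $a_1\ne a_2$, $b_i\ne b_j$ and $c_i\ne c_j$ for $i\ne j$, and $a_1+(m-1)a_2=\sum_{i=1}^m(b_i+c_i)$. Define $m\times m$ matrices by $B_{ij}=b_i+c_{m+1-i}-a_2$ for $i<j$, $B_{ii}=b_i$, $B_{ij}=0$ for $i>j$; $C_{ij}=0$ for $i<j$, $C_{ii}=c_{m+1-i}$, $C_{ij}=b_i+c_{m+1-i}-a_2$ for $i>j$; and ${\bf A}={\bf B}+{\bf C}$. For $i=1,\dots,m$ let ${\bf v}_i$ be the eigenvector of ${\bf B}$ with eigenvalue $b_i$ whose $i$-th coordinate is $1$ and whose later coordinates are $0$. Assume $b_i+c_k-a_2\ne 0$ for all $i,k$, and define a symmetric bilinear form $\langle\cdot,\cdot\rangle$ on $\mathbb{C}^m$ by $\langle{\bf v}_i,{\bf v}_j\rangle=0$ for $i\ne j$ and $$\langle{\bf v}_i,{\bf v}_i\rangle=\frac{\prod_{k=i+1}^m(b_i-b_k)}{\prod_{k=1}^{i-1}(b_i-b_k)}\cdot\frac{\prod_{k=m+2-i}^m(b_i+c_k-a_2)}{\prod_{k=1}^{m+1-i}(b_i+c_k-a_2)}.$$ Then ${\bf A}$, ${\bf B}$ and ${\bf C}$ are self-adjoint with respect to $\langle\cdot,\cdot\rangle$.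
   Context: Empty products equal $1$. Coordinates are with respect to the standard basis of $\mathbb{C}^m$. *)

theory Defs
  imports Complex_Main
begin

text \<open>Vectors in C^m are functions nat => complex (coordinates 1..m),
  m x m matrices are functions nat => nat => complex (indices 1..m).\<close>

definition Bmat :: "nat \<Rightarrow> complex \<Rightarrow> (nat \<Rightarrow> complex) \<Rightarrow> (nat \<Rightarrow> complex) \<Rightarrow> nat \<Rightarrow> nat \<Rightarrow> complex" where
  "Bmat m a2 b c i j = (if i < j then b i + c (m + 1 - i) - a2 else if i = j then b i else 0)"

definition Cmat :: "nat \<Rightarrow> complex \<Rightarrow> (nat \<Rightarrow> complex) \<Rightarrow> (nat \<Rightarrow> complex) \<Rightarrow> nat \<Rightarrow> nat \<Rightarrow> complex" where
  "Cmat m a2 b c i j = (if i < j then 0 else if i = j then c (m + 1 - i) else b i + c (m + 1 - i) - a2)"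

definition Amat :: "nat \<Rightarrow> complex \<Rightarrow> (nat \<Rightarrow> complex) \<Rightarrow> (nat \<Rightarrow> complex) \<Rightarrow> nat \<Rightarrow> nat \<Rightarrow> complex" where
  "Amat m a2 b c i j = Bmat m a2 b c i j + Cmat m a2 b c i j"

definition mulv :: "nat \<Rightarrow> (nat \<Rightarrow> nat \<Rightarrow> complex) \<Rightarrow> (nat \<Rightarrow> complex) \<Rightarrow> nat \<Rightarrow> complex" where
  "mulv m M x i = (\<Sum>j=1..m. M i j * x j)"

definition bform :: "nat \<Rightarrow> (nat \<Rightarrow> nat \<Rightarrow> complex) \<Rightarrow> (nat \<Rightarrow> complex) \<Rightarrow> (nat \<Rightarrow> complex) \<Rightarrow> complex" where
  "bform m G x y = (\<Sum>k=1..m. \<Sum>l=1..m. x k * G k l * y l)"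

definition diagval :: "nat \<Rightarrow> complex \<Rightarrow> (nat \<Rightarrow> complex) \<Rightarrow> (nat \<Rightarrow> complex) \<Rightarrow> nat \<Rightarrow> complex" where
  "diagval m a2 b c i =
     (\<Prod>k=i+1..m. b i - b k) / (\<Prod>k=1..i-1. b i - b k) *
     ((\<Prod>k=m+2-i..m. b i + c k - a2) / (\<Prod>k=1..m+1-i. b i + c k - a2))"

definition self_adjoint_wrt :: "nat \<Rightarrow> (nat \<Rightarrow> nat \<Rightarrow> complex) \<Rightarrow> (nat \<Rightarrow> nat \<Rightarrow> complex) \<Rightarrow> bool" where
  "self_adjoint_wrt m G M \<longleftrightarrow> (\<forall>x y. bform m G (mulv m M x) y = bform m G x (mulv m M y))"

end

theory Submission
  imports Defs
begin

(* With d k = b k + c (m + 1 - k) - a2, row k of A x is a2 x k + d k (x 1 + ... + x m), so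
   A = a2 I + d 1^T and C = A - B.  B is diagonal in the G-orthogonal eigenbasis v, hence
   self-adjoint, and A is self-adjoint as soon as d represents the functional 1^T, that is
   G(d, v j) = G(v j, d) = 1^T v j.  Solving the triangular eigenvalue equations expresses the
   tail sums of v j as products; this turns the expansion d = \<Sum>j \<beta> j v j into the fact that
   the divided difference over n nodes of a monic polynomial of degree n is the sum of the nodes
   plus its subleading coefficient.  The prescribed values G(v j, v j) are exactly (1^T v j) / \<beta> j. *)

definition divided_diff :: "('i \<Rightarrow> 'a::field) \<Rightarrow> ('a \<Rightarrow> 'a) \<Rightarrow> 'i set \<Rightarrow> 'a" where
  "divided_diff x f K = (\<Sum>j\<in>K. f (x j) / (\<Prod>l\<in>K - {j}. x j - x l))"

lemma divided_diff_add:
  "divided_diff x (\<lambda>t. f t + g t) K = divided_diff x f K + divided_diff x g K"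
  by (simp add: divided_diff_def add_divide_distrib sum.distrib)

lemma divided_diff_diff:
  "divided_diff x (\<lambda>t. f t - g t) K = divided_diff x f K - divided_diff x g K"
  by (simp add: divided_diff_def diff_divide_distrib sum_subtractf)

lemma divided_diff_cmult:
  "divided_diff x (\<lambda>t. a * f t) K = a * divided_diff x f K"
  by (simp add: divided_diff_def sum_distrib_left)

lemma divided_diff_singleton: "divided_diff x f {a} = f (x a)"
  by (simp add: divided_diff_def)

lemma divided_diff_linear_factor:
  assumes "finite K" "inj_on x K" "a \<in> K"
  shows "divided_diff x (\<lambda>t. (t - x a) * g t) K = divided_diff x g (K - {a})"
proof -
  have "divided_diff x (\<lambda>t. (t - x a) * g t) K =
      (\<Sum>j\<in>K - {a}. (x j - x a) * g (x j) / (\<Prod>l\<in>K - {j}. x j - x l))"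
    unfolding divided_diff_def by (simp add: sum.remove[OF assms(1,3)])
  also have "\<dots> = (\<Sum>j\<in>K - {a}. g (x j) / (\<Prod>l\<in>K - {a} - {j}. x j - x l))"
  proof (rule sum.cong[OF refl])
    fix j assume j: "j \<in> K - {a}"
    then have "K - {j} = insert a (K - {a} - {j})" using assms(3) by auto
    then have "(\<Prod>l\<in>K - {j}. x j - x l) = (x j - x a) * (\<Prod>l\<in>K - {a} - {j}. x j - x l)"
      using assms(1) by simp
    moreover have "x j \<noteq> x a" using assms(2,3) j by (auto dest: inj_onD)
    ultimately show "(x j - x a) * g (x j) / (\<Prod>l\<in>K - {j}. x j - x l) =
        g (x j) / (\<Prod>l\<in>K - {a} - {j}. x j - x l)"
      by simp
  qed
  finally show ?thesis by (simp add: divided_diff_def)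
qed

lemma divided_diff_times_linear:
  assumes "finite K" "inj_on x K" "a \<in> K"
  shows "divided_diff x (\<lambda>t. (t + \<gamma>) * g t) K =
    divided_diff x g (K - {a}) + (x a + \<gamma>) * divided_diff x g K"
proof -
  have "(\<lambda>t. (t + \<gamma>) * g t) = (\<lambda>t. (t - x a) * g t + (x a + \<gamma>) * g t)"
    by (simp add: algebra_simps)
  then show ?thesis
    by (simp add: divided_diff_add divided_diff_cmult divided_diff_linear_factor[OF assms])
qed

lemma divided_diff_one_eq_0:
  fixes x :: "'i \<Rightarrow> 'a::field"
  assumes "finite K" "inj_on x K" "card K \<ge> 2"
  shows "divided_diff x (\<lambda>t. 1) K = 0"
  using assms
proof (induction "card K" arbitrary: K rule: less_induct)
  case less
  obtain a b where ab: "a \<in> K" "b \<in> K" "a \<noteq> b"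
    using less.prems(3) card_le_Suc_iff[of 1 K] by (auto simp: numeral_2_eq_2 Suc_le_eq card_gt_0_iff)
  have xab: "x a \<noteq> x b" using less.prems(2) ab by (auto dest: inj_onD)
  have "divided_diff x (\<lambda>t. 1) K =
      divided_diff x (\<lambda>t. inverse (x a - x b) * ((t - x b) * 1 - (t - x a) * 1)) K"
    by (rule arg_cong[where f = "\<lambda>f. divided_diff x f K"]) (use xab in \<open>simp add: field_simps\<close>)
  also have "\<dots> =
      inverse (x a - x b) * (divided_diff x (\<lambda>t. 1) (K - {b}) - divided_diff x (\<lambda>t. 1) (K - {a}))"
    by (simp only: divided_diff_cmult divided_diff_diff
        divided_diff_linear_factor[OF less.prems(1,2) ab(1)] divided_diff_linear_factor[OF less.prems(1,2) ab(2)])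
  also have "\<dots> = 0"
  proof (cases "card K = 2")
    case True
    then obtain u w where "K = {u, w}" by (meson card_2_iff)
    with ab show ?thesis by (auto simp: insert_Diff_if divided_diff_singleton)
  next
    case False
    then have "card (K - {b}) \<ge> 2" "card (K - {a}) \<ge> 2" "card (K - {b}) < card K" "card (K - {a}) < card K"
      using ab less.prems by (auto simp: card_Diff_singleton)
    then show ?thesis using less.hyps less.prems by (simp add: inj_on_diff)
  qed
  finally show ?case .
qed

lemma divided_diff_prod_eq_0:
  assumes "finite P" "finite K" "inj_on x K" "card P + 2 \<le> card K"
  shows "divided_diff x (\<lambda>t. \<Prod>p\<in>P. t + \<gamma> p) K = 0"
  using assms
proof (induction P arbitrary: K rule: finite_induct)
  case empty
  then show ?case by (simp add: divided_diff_one_eq_0)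
next
  case (insert q P)
  obtain a where a: "a \<in> K" using insert.prems(3) by fastforce
  have "divided_diff x (\<lambda>t. \<Prod>p\<in>insert q P. t + \<gamma> p) K =
      divided_diff x (\<lambda>t. (t + \<gamma> q) * (\<Prod>p\<in>P. t + \<gamma> p)) K"
    using insert.hyps by simp
  also have "\<dots> = divided_diff x (\<lambda>t. \<Prod>p\<in>P. t + \<gamma> p) (K - {a})
      + (x a + \<gamma> q) * divided_diff x (\<lambda>t. \<Prod>p\<in>P. t + \<gamma> p) K"
    by (rule divided_diff_times_linear[OF insert.prems(1,2) a])
  also have "\<dots> = 0"
    using insert a by (simp add: card_Diff_singleton inj_on_diff)
  finally show ?case .
qed

lemma divided_diff_prod_eq_1:
  assumes "finite P" "finite K" "inj_on x K" "card K = card P + 1"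
  shows "divided_diff x (\<lambda>t. \<Prod>p\<in>P. t + \<gamma> p) K = 1"
  using assms
proof (induction P arbitrary: K rule: finite_induct)
  case empty
  then show ?case by (auto simp: card_1_singleton_iff divided_diff_singleton)
next
  case (insert q P)
  obtain a where a: "a \<in> K" using insert.prems(3) by fastforce
  have "divided_diff x (\<lambda>t. \<Prod>p\<in>insert q P. t + \<gamma> p) K =
      divided_diff x (\<lambda>t. \<Prod>p\<in>P. t + \<gamma> p) (K - {a})
      + (x a + \<gamma> q) * divided_diff x (\<lambda>t. \<Prod>p\<in>P. t + \<gamma> p) K"
    using insert.hyps divided_diff_times_linear[OF insert.prems(1,2) a] by simp
  also have "\<dots> = 1"
    using insert a divided_diff_prod_eq_0[OF insert.hyps(1) insert.prems(1,2)]
    by (simp add: card_Diff_singleton inj_on_diff)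
  finally show ?case .
qed

lemma divided_diff_prod_eq_sum:
  assumes "finite P" "finite K" "inj_on x K" "card K = card P"
  shows "divided_diff x (\<lambda>t. \<Prod>p\<in>P. t + \<gamma> p) K = (\<Sum>l\<in>K. x l) + (\<Sum>p\<in>P. \<gamma> p)"
  using assms
proof (induction P arbitrary: K rule: finite_induct)
  case empty
  then show ?case by (simp add: divided_diff_def)
next
  case (insert q P)
  obtain a where a: "a \<in> K" using insert.prems(3) insert.hyps by fastforce
  have "divided_diff x (\<lambda>t. \<Prod>p\<in>insert q P. t + \<gamma> p) K =
      divided_diff x (\<lambda>t. \<Prod>p\<in>P. t + \<gamma> p) (K - {a})
      + (x a + \<gamma> q) * divided_diff x (\<lambda>t. \<Prod>p\<in>P. t + \<gamma> p) K"
    using insert.hyps divided_diff_times_linear[OF insert.prems(1,2) a] by simp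
  also have "\<dots> = (\<Sum>l\<in>K. x l) + (\<Sum>p\<in>insert q P. \<gamma> p)"
    using insert a divided_diff_prod_eq_1[OF insert.hyps(1) insert.prems(1,2)]
    by (simp add: card_Diff_singleton inj_on_diff sum.remove)
  finally show ?case .
qed

lemma prod_atLeastAtMost_reflect:
  fixes f :: "nat \<Rightarrow> 'a::comm_monoid_mult"
  assumes "1 \<le> k" "k \<le> j" "j \<le> m + 1"
  shows "(\<Prod>l=k..j-1. f (m + 1 - l)) = (\<Prod>p=m+2-j..m+1-k. f p)"
  by (rule prod.reindex_bij_witness[where i = "\<lambda>p. m + 1 - p" and j = "\<lambda>l. m + 1 - l"])
    (use assms in auto)

lemma sum_atLeastAtMost_reflect:
  fixes f :: "nat \<Rightarrow> 'a::comm_monoid_add"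
  shows "(\<Sum>l=k..m. f (m + 1 - l)) = (\<Sum>p=1..m+1-k. f p)"
  by (rule sum.reindex_bij_witness[where i = "\<lambda>p. m + 1 - p" and j = "\<lambda>l. m + 1 - l"]) auto

lemma mulv_cong: "(\<And>k. k \<in> {1..m} \<Longrightarrow> x k = y k) \<Longrightarrow> mulv m M x i = mulv m M y i"
  unfolding mulv_def by (rule sum.cong) auto

lemma mulv_sum: "mulv m M (\<lambda>k. \<Sum>i\<in>I. \<alpha> i * u i k) j = (\<Sum>i\<in>I. \<alpha> i * mulv m M (u i) j)"
  unfolding mulv_def by (simp add: sum_distrib_left algebra_simps sum.swap[of _ I])

lemma bform_cong:
  "(\<And>k. k \<in> {1..m} \<Longrightarrow> x k = x' k) \<Longrightarrow> (\<And>k. k \<in> {1..m} \<Longrightarrow> y k = y' k) \<Longrightarrow>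
    bform m G x y = bform m G x' y'"
  unfolding bform_def by (intro sum.cong refl) auto

lemma bform_add_left: "bform m G (\<lambda>k. x k + y k) z = bform m G x z + bform m G y z"
  unfolding bform_def by (simp add: algebra_simps sum.distrib)

lemma bform_add_right: "bform m G z (\<lambda>k. x k + y k) = bform m G z x + bform m G z y"
  unfolding bform_def by (simp add: algebra_simps sum.distrib)

lemma bform_diff_left: "bform m G (\<lambda>k. x k - y k) z = bform m G x z - bform m G y z"
  unfolding bform_def by (simp add: algebra_simps sum_subtractf)

lemma bform_diff_right: "bform m G z (\<lambda>k. x k - y k) = bform m G z x - bform m G z y"
  unfolding bform_def by (simp add: algebra_simps sum_subtractf)

lemma bform_cmult_left: "bform m G (\<lambda>k. \<alpha> * x k) y = \<alpha> * bform m G x y"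
  unfolding bform_def by (simp add: sum_distrib_left algebra_simps)

lemma bform_cmult_right: "bform m G x (\<lambda>k. \<alpha> * y k) = \<alpha> * bform m G x y"
  unfolding bform_def by (simp add: sum_distrib_left algebra_simps)

lemma bform_sum_left:
  "bform m G (\<lambda>k. \<Sum>i\<in>I. \<alpha> i * u i k) y = (\<Sum>i\<in>I. \<alpha> i * bform m G (u i) y)"
  unfolding bform_def by (simp add: sum_distrib_left sum_distrib_right algebra_simps sum.swap[of _ I])

lemma bform_sum_right:
  "bform m G x (\<lambda>k. \<Sum>i\<in>I. \<alpha> i * u i k) = (\<Sum>i\<in>I. \<alpha> i * bform m G x (u i))"
  unfolding bform_def by (simp add: sum_distrib_left sum_distrib_right algebra_simps sum.swap[of _ I])

lemma unitriangular_span_prefix: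
  fixes m r :: nat and v :: "nat \<Rightarrow> nat \<Rightarrow> 'a::comm_ring_1"
  assumes diag: "\<And>i. i \<in> {1..m} \<Longrightarrow> v i i = 1"
    and below: "\<And>i k. i \<in> {1..m} \<Longrightarrow> k \<in> {i<..m} \<Longrightarrow> v i k = 0"
    and "r \<le> m" "\<forall>k\<in>{r<..m}. x k = 0"
  shows "\<exists>\<alpha>. \<forall>k\<in>{1..m}. x k = (\<Sum>i=1..r. \<alpha> i * v i k)"
  using assms(3,4)
proof (induction r arbitrary: x)
  case 0
  then show ?case by auto
next
  case (Suc r)
  define x' where "x' k = x k - x (Suc r) * v (Suc r) k" for k
  have "x' k = 0" if "k \<in> {r<..m}" for k
    using that Suc.prems diag[of "Suc r"] below[of "Suc r" k]
    by (cases "k = Suc r") (auto simp: x'_def)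
  then obtain \<alpha> where \<alpha>: "\<forall>k\<in>{1..m}. x' k = (\<Sum>i=1..r. \<alpha> i * v i k)"
    using Suc.IH[of x'] Suc.prems(1) by auto
  have "x k = (\<Sum>i=1..Suc r. (\<alpha>(Suc r := x (Suc r))) i * v i k)" if "k \<in> {1..m}" for k
    using \<alpha> that by (simp add: x'_def algebra_simps)
  then show ?case by blast
qed

lemma self_adjoint_wrt_unitriangular_basis:
  assumes "\<And>i. i \<in> {1..m} \<Longrightarrow> v i i = 1"
    and "\<And>i k. i \<in> {1..m} \<Longrightarrow> k \<in> {i<..m} \<Longrightarrow> v i k = 0"
    and basis: "\<And>i j. i \<in> {1..m} \<Longrightarrow> j \<in> {1..m} \<Longrightarrow>
      bform m G (mulv m M (v i)) (v j) = bform m G (v i) (mulv m M (v j))"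
  shows "self_adjoint_wrt m G M"
  unfolding self_adjoint_wrt_def
proof (intro allI)
  fix x y
  obtain \<alpha> where \<alpha>: "\<forall>k\<in>{1..m}. x k = (\<Sum>i=1..m. \<alpha> i * v i k)"
    using unitriangular_span_prefix[of m v m, OF assms(1,2)] by auto
  obtain \<beta> where \<beta>: "\<forall>k\<in>{1..m}. y k = (\<Sum>j=1..m. \<beta> j * v j k)"
    using unitriangular_span_prefix[of m v m, OF assms(1,2)] by auto
  have Mx: "mulv m M x k = (\<Sum>i=1..m. \<alpha> i * mulv m M (v i) k)" for k
    using mulv_cong[of m x _ M k] \<alpha> by (simp add: mulv_sum)
  have My: "mulv m M y k = (\<Sum>j=1..m. \<beta> j * mulv m M (v j) k)" for k
    using mulv_cong[of m y _ M k] \<beta> by (simp add: mulv_sum)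
  have "bform m G (mulv m M x) y =
      bform m G (\<lambda>k. \<Sum>i=1..m. \<alpha> i * mulv m M (v i) k) (\<lambda>k. \<Sum>j=1..m. \<beta> j * v j k)"
    using \<beta> by (intro bform_cong) (auto simp: Mx)
  also have "\<dots> = (\<Sum>i=1..m. \<alpha> i * (\<Sum>j=1..m. \<beta> j * bform m G (mulv m M (v i)) (v j)))"
    by (simp add: bform_sum_left bform_sum_right)
  also have "\<dots> = (\<Sum>i=1..m. \<alpha> i * (\<Sum>j=1..m. \<beta> j * bform m G (v i) (mulv m M (v j))))"
    using basis by simp
  also have "\<dots> = bform m G (\<lambda>k. \<Sum>i=1..m. \<alpha> i * v i k) (\<lambda>k. \<Sum>j=1..m. \<beta> j * mulv m M (v j) k)"
    by (simp add: bform_sum_left bform_sum_right)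
  also have "\<dots> = bform m G x (mulv m M y)"
    using \<alpha> by (intro bform_cong) (auto simp: My)
  finally show "bform m G (mulv m M x) y = bform m G x (mulv m M y)" .
qed

lemma self_adjoint_wrt_diff:
  assumes "self_adjoint_wrt m G M" "self_adjoint_wrt m G N"
  shows "self_adjoint_wrt m G (\<lambda>i j. M i j - N i j)"
proof -
  have "mulv m (\<lambda>i j. M i j - N i j) x = (\<lambda>k. mulv m M x k - mulv m N x k)" for x
    by (rule ext) (simp add: mulv_def algebra_simps sum_subtractf)
  then show ?thesis
    using assms by (simp add: self_adjoint_wrt_def bform_diff_left bform_diff_right)
qed

definition off_diag ::
    "nat \<Rightarrow> complex \<Rightarrow> (nat \<Rightarrow> complex) \<Rightarrow> (nat \<Rightarrow> complex) \<Rightarrow> nat \<Rightarrow> complex" where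
  "off_diag m a2 b c i = b i + c (m + 1 - i) - a2"

lemma mulv_Bmat:
  assumes "k \<in> {1..m}"
  shows "mulv m (Bmat m a2 b c) x k = b k * x k + off_diag m a2 b c k * (\<Sum>l=Suc k..m. x l)"
proof -
  have "mulv m (Bmat m a2 b c) x k =
      (\<Sum>l=1..m. (if l = k then b k * x l else 0) + (if k < l then off_diag m a2 b c k * x l else 0))"
    unfolding mulv_def by (rule sum.cong) (auto simp: Bmat_def off_diag_def)
  moreover have "(\<Sum>l=1..m. if k < l then off_diag m a2 b c k * x l else 0) =
      (\<Sum>l=Suc k..m. off_diag m a2 b c k * x l)"
    using assms by (intro sum.mono_neutral_cong_right) auto
  ultimately show ?thesis
    using assms by (simp add: sum.distrib sum_distrib_left)
qed

lemma mulv_Amat: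
  assumes "k \<in> {1..m}"
  shows "mulv m (Amat m a2 b c) x k = a2 * x k + off_diag m a2 b c k * (\<Sum>l=1..m. x l)"
proof -
  have "mulv m (Amat m a2 b c) x k =
      (\<Sum>l=1..m. off_diag m a2 b c k * x l + (if l = k then a2 * x l else 0))"
    unfolding mulv_def by (rule sum.cong) (auto simp: Amat_def Bmat_def Cmat_def off_diag_def algebra_simps)
  then show ?thesis
    using assms by (simp add: sum.distrib sum_distrib_left)
qed

locale unitriangular_eigenbasis =
  fixes m :: nat and a2 :: complex and b c :: "nat \<Rightarrow> complex" and v :: "nat \<Rightarrow> nat \<Rightarrow> complex"
  assumes inj_b: "inj_on b {1..m}"
    and shifted_nonzero: "\<And>i k. i \<in> {1..m} \<Longrightarrow> k \<in> {1..m} \<Longrightarrow> b i + c k - a2 \<noteq> 0"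
    and eigenvector: "\<And>i k. i \<in> {1..m} \<Longrightarrow> k \<in> {1..m} \<Longrightarrow>
      mulv m (Bmat m a2 b c) (v i) k = b i * v i k"
    and unit_diag: "\<And>i. i \<in> {1..m} \<Longrightarrow> v i i = 1"
    and zero_after_diag: "\<And>i k. i \<in> {1..m} \<Longrightarrow> k \<in> {i<..m} \<Longrightarrow> v i k = 0"
begin

abbreviation d :: "nat \<Rightarrow> complex" where
  "d \<equiv> off_diag m a2 b c"

lemma b_diff_nonzero: "j \<in> {1..m} \<Longrightarrow> l \<in> {1..m} \<Longrightarrow> j \<noteq> l \<Longrightarrow> b j - b l \<noteq> 0"
  using inj_onD[OF inj_b] by force

definition tail_prod :: "nat \<Rightarrow> nat \<Rightarrow> complex" where
  "tail_prod j k = (\<Prod>l=k..j-1. (b j + c (m + 1 - l) - a2) / (b j - b l))"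

lemma tail_sum_eq_0: "j \<in> {1..m} \<Longrightarrow> j < k \<Longrightarrow> (\<Sum>l=k..m. v j l) = 0"
  using zero_after_diag by (intro sum.neutral) auto

(* Row n of the eigenvalue equation reads (b j - b n) * v j n = d n * (tail sum from n + 1), so each
   tail sum is the next one times (b j + c (m + 1 - n) - a2) / (b j - b n). *)
lemma tail_sum_eq_tail_prod:
  assumes j: "j \<in> {1..m}" and k: "1 \<le> k" "k \<le> j"
  shows "(\<Sum>l=k..m. v j l) = tail_prod j k"
  using k(2)
proof (induction k rule: inc_induct)
  case base
  have "(\<Sum>l=j..m. v j l) = v j j + (\<Sum>l=Suc j..m. v j l)"
    using j by (intro sum.atLeast_Suc_atMost) auto
  then show ?case using j by (simp add: unit_diag tail_sum_eq_0 tail_prod_def)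
next
  case (step n)
  have n: "n \<in> {1..m}" "n < j" using step.hyps k j by auto
  define X where "X = (\<Sum>l=Suc n..m. v j l)"
  have "b n * v j n + d n * X = b j * v j n"
    using mulv_Bmat[OF n(1), of a2 b c "v j"] eigenvector[OF j n(1)] by (simp add: X_def)
  moreover have "b j - b n \<noteq> 0" using b_diff_nonzero[OF j n(1)] n by auto
  ultimately have "v j n + X = (b j + c (m + 1 - n) - a2) / (b j - b n) * X"
    by (simp add: off_diag_def field_simps)
  moreover have "(\<Sum>l=n..m. v j l) = v j n + X"
    unfolding X_def using n by (intro sum.atLeast_Suc_atMost) auto
  moreover have "tail_prod j n = (b j + c (m + 1 - n) - a2) / (b j - b n) * tail_prod j (Suc n)"
    unfolding tail_prod_def using n by (intro prod.atLeast_Suc_atMost) auto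
  ultimately show ?case using step.IH by (simp add: X_def)
qed

definition expansion_coeff :: "nat \<Rightarrow> complex" where
  "expansion_coeff j = (\<Prod>p=1..m+1-j. b j + c p - a2) / (\<Prod>l=j+1..m. b j - b l)"

lemma expansion_coeff_times_tail_prod:
  assumes "1 \<le> k" "k \<le> j" "j \<le> m"
  shows "expansion_coeff j * tail_prod j k =
    (\<Prod>p=1..m+1-k. b j + (c p - a2)) / (\<Prod>l\<in>{k..m} - {j}. b j - b l)"
proof -
  have "tail_prod j k = (\<Prod>p=m+2-j..m+1-k. b j + c p - a2) / (\<Prod>l=k..j-1. b j - b l)"
    unfolding tail_prod_def prod_dividef
    using prod_atLeastAtMost_reflect[of k j m "\<lambda>p. b j + c p - a2"] assms by simp
  moreover have "{1..m+1-k} = {1..m+1-j} \<union> {m+2-j..m+1-k}" "{k..m} - {j} = {j+1..m} \<union> {k..j-1}"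
    using assms by auto
  ultimately show ?thesis
    unfolding expansion_coeff_def
    by (simp add: prod.union_disjoint add_diff_eq times_divide_times_eq)
qed

(* The weighted tail sums form the divided difference of \<Prod>p (t + c p - a2) over the nodes b k, ..., b m. *)
lemma expansion_coeff_tail_sums:
  assumes "1 \<le> k" "k \<le> m + 1"
  shows "(\<Sum>j=1..m. expansion_coeff j * (\<Sum>l=k..m. v j l)) = (\<Sum>l=k..m. d l)"
proof -
  have "(\<Sum>j=1..m. expansion_coeff j * (\<Sum>l=k..m. v j l)) = (\<Sum>j=k..m. expansion_coeff j * tail_prod j k)"
    using assms by (intro sum.mono_neutral_cong_right) (auto simp: tail_sum_eq_0 tail_sum_eq_tail_prod)
  also have "\<dots> = divided_diff b (\<lambda>t. \<Prod>p=1..m+1-k. t + (c p - a2)) {k..m}"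
    unfolding divided_diff_def using assms by (intro sum.cong) (auto simp: expansion_coeff_times_tail_prod)
  also have "\<dots> = (\<Sum>l=k..m. b l) + (\<Sum>p=1..m+1-k. c p - a2)"
    using assms by (intro divided_diff_prod_eq_sum inj_on_subset[OF inj_b]) auto
  also have "\<dots> = (\<Sum>l=k..m. d l)"
    using sum_atLeastAtMost_reflect[where f = "\<lambda>p. c p - a2" and k = k and m = m]
    by (simp add: off_diag_def sum.distrib flip: add_diff_eq)
  finally show ?thesis .
qed

lemma off_diag_expansion:
  assumes "k \<in> {1..m}"
  shows "(\<Sum>j=1..m. expansion_coeff j * v j k) = d k"
proof -
  have split: "(\<Sum>l=k..m. f l) = f k + (\<Sum>l=Suc k..m. f l)" for f :: "nat \<Rightarrow> complex"
    using assms by (intro sum.atLeast_Suc_atMost) auto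
  have "(\<Sum>j=1..m. expansion_coeff j * v j k) =
      (\<Sum>j=1..m. expansion_coeff j * (\<Sum>l=k..m. v j l)) - (\<Sum>j=1..m. expansion_coeff j * (\<Sum>l=Suc k..m. v j l))"
    by (simp add: split algebra_simps sum.distrib)
  also have "\<dots> = (\<Sum>l=k..m. d l) - (\<Sum>l=Suc k..m. d l)"
    using assms expansion_coeff_tail_sums[of k] expansion_coeff_tail_sums[of "Suc k"] by simp
  also have "\<dots> = d k"
    by (simp add: split)
  finally show ?thesis .
qed

lemma expansion_coeff_times_diagval:
  assumes j: "j \<in> {1..m}"
  shows "expansion_coeff j * diagval m a2 b c j = (\<Sum>l=1..m. v j l)"
proof -
  have "(\<Prod>l=j+1..m. b j - b l) \<noteq> 0" using b_diff_nonzero j by auto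
  moreover have "b j + c p - a2 \<noteq> 0" if "p \<in> {1..m+1-j}" for p
    using that j by (intro shifted_nonzero) auto
  then have "(\<Prod>p=1..m+1-j. b j + c p - a2) \<noteq> 0" by simp
  moreover have "(\<Sum>l=1..m. v j l) = (\<Prod>p=m+2-j..m. b j + c p - a2) / (\<Prod>l=1..j-1. b j - b l)"
    using tail_sum_eq_tail_prod[of j 1] prod_atLeastAtMost_reflect[of 1 j m "\<lambda>p. b j + c p - a2"] j
    by (simp add: tail_prod_def prod_dividef)
  ultimately show ?thesis
    by (simp add: expansion_coeff_def diagval_def field_simps)
qed

end

locale orthogonal_eigenbasis = unitriangular_eigenbasis +
  fixes G :: "nat \<Rightarrow> nat \<Rightarrow> complex"
  assumes gram: "\<And>i j. i \<in> {1..m} \<Longrightarrow> j \<in> {1..m} \<Longrightarrow>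
    bform m G (v i) (v j) = (if i = j then diagval m a2 b c i else 0)"
begin

lemma bform_off_diag_left:
  assumes "j \<in> {1..m}"
  shows "bform m G d (v j) = (\<Sum>l=1..m. v j l)"
proof -
  have "bform m G d (v j) = bform m G (\<lambda>k. \<Sum>i=1..m. expansion_coeff i * v i k) (v j)"
    using off_diag_expansion by (intro bform_cong) auto
  also have "\<dots> = (\<Sum>i=1..m. if i = j then expansion_coeff j * diagval m a2 b c j else 0)"
    unfolding bform_sum_left using assms by (intro sum.cong) (auto simp: gram)
  finally show ?thesis
    using assms by (simp add: expansion_coeff_times_diagval)
qed

lemma bform_off_diag_right:
  assumes "j \<in> {1..m}"
  shows "bform m G (v j) d = (\<Sum>l=1..m. v j l)"
proof -
  have "bform m G (v j) d = bform m G (v j) (\<lambda>k. \<Sum>i=1..m. expansion_coeff i * v i k)"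
    using off_diag_expansion by (intro bform_cong) auto
  also have "\<dots> = (\<Sum>i=1..m. if i = j then expansion_coeff j * diagval m a2 b c j else 0)"
    unfolding bform_sum_right using assms by (intro sum.cong) (auto simp: gram)
  finally show ?thesis
    using assms by (simp add: expansion_coeff_times_diagval)
qed

lemma self_adjoint_Bmat: "self_adjoint_wrt m G (Bmat m a2 b c)"
proof (rule self_adjoint_wrt_unitriangular_basis[OF unit_diag zero_after_diag])
  fix i j assume i: "i \<in> {1..m}" and j: "j \<in> {1..m}"
  have "bform m G (mulv m (Bmat m a2 b c) (v i)) (v j) = bform m G (\<lambda>k. b i * v i k) (v j)"
    using eigenvector[OF i] by (intro bform_cong) auto
  moreover have "bform m G (v i) (mulv m (Bmat m a2 b c) (v j)) = bform m G (v i) (\<lambda>k. b j * v j k)"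
    using eigenvector[OF j] by (intro bform_cong) auto
  ultimately show
      "bform m G (mulv m (Bmat m a2 b c) (v i)) (v j) = bform m G (v i) (mulv m (Bmat m a2 b c) (v j))"
    using i j by (simp add: bform_cmult_left bform_cmult_right gram)
qed

lemma self_adjoint_Amat: "self_adjoint_wrt m G (Amat m a2 b c)"
proof (rule self_adjoint_wrt_unitriangular_basis[OF unit_diag zero_after_diag])
  fix i j assume i: "i \<in> {1..m}" and j: "j \<in> {1..m}"
  have "bform m G (mulv m (Amat m a2 b c) (v i)) (v j) =
      bform m G (\<lambda>k. a2 * v i k + (\<Sum>l=1..m. v i l) * d k) (v j)"
    by (intro bform_cong) (simp_all add: mulv_Amat mult.commute)
  moreover have "bform m G (v i) (mulv m (Amat m a2 b c) (v j)) =
      bform m G (v i) (\<lambda>k. a2 * v j k + (\<Sum>l=1..m. v j l) * d k)"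
    by (intro bform_cong) (simp_all add: mulv_Amat mult.commute)
  ultimately show
      "bform m G (mulv m (Amat m a2 b c) (v i)) (v j) = bform m G (v i) (mulv m (Amat m a2 b c) (v j))"
    using i j by (simp add: bform_add_left bform_add_right bform_cmult_left bform_cmult_right
        bform_off_diag_left bform_off_diag_right gram)
qed

lemma self_adjoint_Cmat: "self_adjoint_wrt m G (Cmat m a2 b c)"
proof -
  have "Cmat m a2 b c = (\<lambda>i j. Amat m a2 b c i j - Bmat m a2 b c i j)"
    by (simp add: Amat_def fun_eq_iff)
  then show ?thesis
    using self_adjoint_wrt_diff[OF self_adjoint_Amat self_adjoint_Bmat] by simp
qed

end

theorem theorem2p6:
  fixes m :: nat and a1 a2 :: complex and b c :: "nat \<Rightarrow> complex"
    and v :: "nat \<Rightarrow> nat \<Rightarrow> complex" and G :: "nat \<Rightarrow> nat \<Rightarrow> complex"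
  assumes "m \<ge> 2"
    and "a1 \<noteq> a2"
    and "inj_on b {1..m}"
    and "inj_on c {1..m}"
    and "a1 + of_nat (m - 1) * a2 = (\<Sum>i=1..m. b i + c i)"
    and "\<forall>i\<in>{1..m}. \<forall>k\<in>{1..m}. b i + c k - a2 \<noteq> 0"
    and "\<forall>i\<in>{1..m}. (\<forall>k\<in>{1..m}. mulv m (Bmat m a2 b c) (v i) k = b i * v i k)
                      \<and> v i i = 1 \<and> (\<forall>k\<in>{i<..m}. v i k = 0)"
    and "\<forall>i\<in>{1..m}. \<forall>j\<in>{1..m}.
           bform m G (v i) (v j) = (if i = j then diagval m a2 b c i else 0)"
  shows "self_adjoint_wrt m G (Amat m a2 b c) \<and> self_adjoint_wrt m G (Bmat m a2 b c)
         \<and> self_adjoint_wrt m G (Cmat m a2 b c)"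
proof -
  interpret orthogonal_eigenbasis m a2 b c v G
    using assms(3,6,7,8) by unfold_locales auto
  show ?thesis
    using self_adjoint_Amat self_adjoint_Bmat self_adjoint_Cmat by blast
qed

end
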